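(* The growth function $g_M:\mathbb{N}_+\to\mathbb{N}$ of every multiway system $M$ is primitive recursive.
   Context: A (string-based) multiway system is a triple $M=(R,s_{\text{init}},\Sigma)$ with $\Sigma$ a finite alphabet, $R$ a finite set of string replacement rules $r\to t$ ($r,t\in\Sigma^*$), and $s_{\text{init}}\in\Sigma^*$. Its states graph has as vertices the strings reachable from $s_{\text{init}}$, with an edge $u\to v$ whenever $v$ arises from $u$ by replacing one occurrence of some rule's left side by its right side. The growth function $g_M(n)$ is the number of states whose shortest-path distance from $s_{\text{init}}$ equals $n-1$ (i.e. the number of new states first appearing in generation $n$). *)

theory Defs
  imports Main
begin

text \<open>An n-ary function on nat is represented as a function on nat lists; only its
values on lists of length n matter. prim_rec n f: f is an n-ary primitive recursive
function (standard inductive definition: zero, successor, projections, composition,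
primitive recursion on the first argument).\<close>

inductive prim_rec :: "nat \<Rightarrow> (nat list \<Rightarrow> nat) \<Rightarrow> bool" where
  pr_zero: "prim_rec n (\<lambda>xs. 0)"
| pr_succ: "prim_rec 1 (\<lambda>xs. Suc (hd xs))"
| pr_proj: "i < n \<Longrightarrow> prim_rec n (\<lambda>xs. xs ! i)"
| pr_comp: "prim_rec m f \<Longrightarrow> length gs = m \<Longrightarrow> (\<forall>g\<in>set gs. prim_rec n g)
            \<Longrightarrow> prim_rec n (\<lambda>xs. f (map (\<lambda>g. g xs) gs))"
| pr_rec: "prim_rec n f \<Longrightarrow> prim_rec (Suc (Suc n)) g
            \<Longrightarrow> prim_rec (Suc n) (\<lambda>xs. case xs of [] \<Rightarrow> f []
                   | y # ys \<Rightarrow> rec_nat (f ys) (\<lambda>k r. g (k # r # ys)) y)"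

definition mw_step :: "('a list \<times> 'a list) set \<Rightarrow> 'a list \<Rightarrow> 'a list \<Rightarrow> bool" where
  "mw_step R u v \<longleftrightarrow> (\<exists>(r, t)\<in>R. \<exists>x y. u = x @ r @ y \<and> v = x @ t @ y)"

definition mw_layer :: "('a list \<times> 'a list) set \<Rightarrow> 'a list \<Rightarrow> nat \<Rightarrow> 'a list set" where
  "mw_layer R s k = {v. (mw_step R ^^ k) s v \<and> (\<forall>j<k. \<not> (mw_step R ^^ j) s v)}"

text \<open>Growth function g_M(n) = number of states at distance n - 1 (used for n \<ge> 1).\<close>
definition growth :: "('a list \<times> 'a list) set \<Rightarrow> 'a list \<Rightarrow> nat \<Rightarrow> nat" where
  "growth R s n = card (mw_layer R s (n - 1))"

end

theory Submission
  imports Defs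
begin

text \<open>Words over \<open>\<Sigma>\<close> are coded injectively by reading them as base-\<open>B\<close> numerals with
  nonzero digits. Applying a rule then becomes a relation between codes, expressed by \<open>div\<close> and
  \<open>mod\<close> by powers of \<open>B\<close> and a bounded search for the position of the redex. A rewriting step
  lengthens a word by at most the longest right-hand side, so all words at distance at most \<open>k\<close>
  have codes below an explicit bound \<open>N\<^sub>k\<close>, and a path of length \<open>k\<close> is coded by a single
  number below \<open>N\<^sub>k ^ (k + 1)\<close> whose base-\<open>N\<^sub>k\<close> digits are the codes of the words along it.
  Hence whether \<open>v\<close> codes a word at distance exactly \<open>k\<close> is decided by a formula with
  bounded quantifiers over arithmetic, and \<open>g\<^sub>M(n)\<close> is a bounded sum of its indicator.\<close>

section \<open>Primitive recursive functions and predicates\<close>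

text \<open>Only the values on lists of length \<open>n\<close> matter, so \<open>pr_fun\<close> asks for agreement with a
  primitive recursive function there; this makes it closed under pointwise rewriting.\<close>

definition pr_fun :: "nat \<Rightarrow> (nat list \<Rightarrow> nat) \<Rightarrow> bool" where
  "pr_fun n g \<longleftrightarrow> (\<exists>f. prim_rec n f \<and> (\<forall>xs. length xs = n \<longrightarrow> f xs = g xs))"

lemma pr_fun_cong: "pr_fun n f \<Longrightarrow> (\<And>xs. length xs = n \<Longrightarrow> f xs = g xs) \<Longrightarrow> pr_fun n g"
  unfolding pr_fun_def by metis

lemma pr_fun_proj: "i < n \<Longrightarrow> pr_fun n (\<lambda>xs. xs ! i)"
  unfolding pr_fun_def using pr_proj by blast

lemma pr_fun_comp:
  assumes "pr_fun m f" "length gs = m" "\<forall>g\<in>set gs. pr_fun n g"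
  shows "pr_fun n (\<lambda>xs. f (map (\<lambda>g. g xs) gs))"
proof -
  obtain f' where f': "prim_rec m f'" "\<forall>xs. length xs = m \<longrightarrow> f' xs = f xs"
    using assms(1) unfolding pr_fun_def by blast
  obtain G where G: "\<forall>g\<in>set gs. prim_rec n (G g) \<and> (\<forall>xs. length xs = n \<longrightarrow> G g xs = g xs)"
    using assms(3) unfolding pr_fun_def by metis
  have "prim_rec n (\<lambda>xs. f' (map (\<lambda>g. g xs) (map G gs)))"
    by (rule pr_comp) (use f' G assms(2) in auto)
  moreover have "f' (map (\<lambda>g. g xs) (map G gs)) = f (map (\<lambda>g. g xs) gs)" if "length xs = n" for xs
  proof -
    have "map (\<lambda>g. g xs) (map G gs) = map (\<lambda>g. g xs) gs"
      using G that by simp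
    then show ?thesis using f' assms(2) by (metis length_map)
  qed
  ultimately show ?thesis unfolding pr_fun_def by blast
qed

lemma pr_fun_comp2:
  assumes "pr_fun 2 (\<lambda>xs. h (xs ! 0) (xs ! 1))" "pr_fun m f" "pr_fun m g"
  shows "pr_fun m (\<lambda>xs. h (f xs) (g xs))"
  using pr_fun_comp[OF assms(1), of "[f, g]"] assms(2,3) by simp

lemma pr_fun_Suc:
  assumes "pr_fun m f" shows "pr_fun m (\<lambda>xs. Suc (f xs))"
proof -
  have "pr_fun 1 (\<lambda>xs. Suc (hd xs))" using pr_succ unfolding pr_fun_def by blast
  from pr_fun_comp[OF this, of "[f]"] assms show ?thesis by simp
qed

lemma pr_fun_const: "pr_fun m (\<lambda>xs. c)"
proof (induction c)
  case 0
  show ?case using pr_zero unfolding pr_fun_def by blast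
qed (rule pr_fun_Suc)

lemma pr_fun_rec_hd:
  assumes "pr_fun n f" "pr_fun (Suc (Suc n)) g"
  shows "pr_fun (Suc n) (\<lambda>xs. rec_nat (f (tl xs)) (\<lambda>k r. g (k # r # tl xs)) (hd xs))"
proof -
  obtain f' where f': "prim_rec n f'" "\<forall>xs. length xs = n \<longrightarrow> f' xs = f xs"
    using assms(1) unfolding pr_fun_def by blast
  obtain g' where g': "prim_rec (Suc (Suc n)) g'" "\<forall>xs. length xs = Suc (Suc n) \<longrightarrow> g' xs = g xs"
    using assms(2) unfolding pr_fun_def by blast
  have "rec_nat (f' ys) (\<lambda>k r. g' (k # r # ys)) y = rec_nat (f ys) (\<lambda>k r. g (k # r # ys)) y"
    if "length ys = n" for y ys
    using that f'(2) g'(2) by (induction y) simp_all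
  then have "(case xs of [] \<Rightarrow> f' [] | y # ys \<Rightarrow> rec_nat (f' ys) (\<lambda>k r. g' (k # r # ys)) y)
      = rec_nat (f (tl xs)) (\<lambda>k r. g (k # r # tl xs)) (hd xs)" if "length xs = Suc n" for xs
    using that by (cases xs) simp_all
  with pr_rec[OF f'(1) g'(1)] show ?thesis unfolding pr_fun_def by blast
qed

lemma pr_fun_rec_nat:
  assumes "pr_fun m z" "pr_fun (Suc (Suc m)) g" "pr_fun m n"
    and "\<And>xs. length xs = m \<Longrightarrow> h xs = rec_nat (z xs) (\<lambda>k r. g (k # r # xs)) (n xs)"
  shows "pr_fun m h"
proof -
  let ?H = "\<lambda>xs. rec_nat (z (tl xs)) (\<lambda>k r. g (k # r # tl xs)) (hd xs)"
  have "pr_fun m (\<lambda>xs. ?H (map (\<lambda>g. g xs) (n # map (\<lambda>i xs. xs ! i) [0..<m])))"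
    by (rule pr_fun_comp[OF pr_fun_rec_hd[OF assms(1,2)]]) (use assms(3) in \<open>auto intro: pr_fun_proj\<close>)
  moreover have "?H (map (\<lambda>g. g xs) (n # map (\<lambda>i xs. xs ! i) [0..<m])) = h xs" if "length xs = m" for xs
  proof -
    have "map (\<lambda>g. g xs) (map (\<lambda>i xs. xs ! i) [0..<m]) = xs"
      using that map_nth[of xs] by (simp add: comp_def)
    then show ?thesis using assms(4)[OF that] by simp
  qed
  ultimately show ?thesis by (rule pr_fun_cong)
qed

lemma pr_fun_reindex:
  assumes "pr_fun m f" "length ids = m" "\<forall>i\<in>set ids. i < n"
  shows "pr_fun n (\<lambda>xs. f (map (\<lambda>i. xs ! i) ids))"
proof -
  have "pr_fun n (\<lambda>xs. f (map (\<lambda>g. g xs) (map (\<lambda>i xs. xs ! i) ids)))"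
    by (rule pr_fun_comp) (use assms in \<open>auto intro: pr_fun_proj\<close>)
  then show ?thesis by (rule pr_fun_cong) (simp add: comp_def)
qed

lemma map_nth_upt_eq_drop: "length xs = k + m \<Longrightarrow> map (\<lambda>i. xs ! i) [k..<k + m] = drop k xs"
  by (rule nth_equalityI) auto

lemma pr_fun_drop2:
  assumes "pr_fun m f" shows "pr_fun (Suc (Suc m)) (\<lambda>xs. f (drop 2 xs))"
proof (rule pr_fun_cong)
  show "pr_fun (Suc (Suc m)) (\<lambda>xs. f (map (\<lambda>i. xs ! i) [2..<2 + m]))"
    by (rule pr_fun_reindex[OF assms]) auto
qed (metis map_nth_upt_eq_drop add_2_eq_Suc)

lemma pr_fun_hd_drop2:
  assumes "pr_fun (Suc m) f" shows "pr_fun (Suc (Suc m)) (\<lambda>xs. f (hd xs # drop 2 xs))"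
proof (rule pr_fun_cong)
  show "pr_fun (Suc (Suc m)) (\<lambda>xs. f (map (\<lambda>i. xs ! i) (0 # [2..<2 + m])))"
    by (rule pr_fun_reindex[OF assms]) auto
  show "f (map (\<lambda>i. xs ! i) (0 # [2..<2 + m])) = f (hd xs # drop 2 xs)"
    if "length xs = Suc (Suc m)" for xs
    using that map_nth_upt_eq_drop[of xs 2 m] by (cases xs) auto
qed

lemma rec_nat_Suc_eq_add: "rec_nat c (\<lambda>k r. Suc r) x = x + c"
  by (induction x) auto

lemma rec_nat_add_eq_mult: "rec_nat 0 (\<lambda>k r. r + c) x = x * c"
  by (induction x) auto

lemma rec_nat_eq_pred: "rec_nat 0 (\<lambda>k r. k) x = x - 1"
  by (induction x) auto

text \<open>Stated with \<open>Suc 0\<close>, the simplifier's normal form of \<open>(k # r # xs) ! 1 - 1\<close>.\<close>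

lemma rec_nat_pred_eq_diff: "rec_nat x (\<lambda>k r. r - Suc 0) y = x - y"
  by (induction y) auto

lemma rec_nat_mult_eq_power: "rec_nat (Suc 0) (\<lambda>k r. c * r) x = c ^ x"
  by (induction x) auto

lemma rec_nat_eq_of_bool_zero: "rec_nat (Suc 0) (\<lambda>k r. 0) x = of_bool (x = 0)"
  by (induction x) auto

lemma rec_nat_eq_mod: "rec_nat 0 (\<lambda>k r. if Suc r = y then 0 else Suc r) x = x mod y"
  by (induction x) (auto simp: mod_Suc)

lemma rec_nat_eq_div: "rec_nat 0 (\<lambda>k r. if Suc k mod y = 0 then Suc r else r) x = x div y"
  by (induction x) (auto simp: div_Suc)

lemma rec_nat_eq_sum: "rec_nat 0 (\<lambda>k r. r + f k) x = (\<Sum>i<x. f i)"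
  by (induction x) auto

lemma pr_fun_add: "pr_fun m f \<Longrightarrow> pr_fun m g \<Longrightarrow> pr_fun m (\<lambda>xs. f xs + g xs)"
  by (rule pr_fun_rec_nat[where z=g and g="\<lambda>ys. Suc (ys ! 1)" and n=f])
     (auto intro: pr_fun_Suc pr_fun_proj simp: rec_nat_Suc_eq_add)

lemma pr_fun_mult: "pr_fun m f \<Longrightarrow> pr_fun m g \<Longrightarrow> pr_fun m (\<lambda>xs. f xs * g xs)"
  by (rule pr_fun_rec_nat[where z="\<lambda>_. 0" and g="\<lambda>ys. ys ! 1 + g (drop 2 ys)" and n=f])
     (auto intro: pr_fun_add pr_fun_drop2 pr_fun_proj pr_fun_const simp: rec_nat_add_eq_mult)

lemma pr_fun_pred: "pr_fun m f \<Longrightarrow> pr_fun m (\<lambda>xs. f xs - 1)"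
  by (rule pr_fun_rec_nat[where z="\<lambda>_. 0" and g="\<lambda>ys. ys ! 0" and n=f])
     (auto intro: pr_fun_proj pr_fun_const simp: rec_nat_eq_pred)

lemma pr_fun_diff:
  assumes "pr_fun m f" "pr_fun m g" shows "pr_fun m (\<lambda>xs. f xs - g xs)"
  by (rule pr_fun_rec_nat[OF assms(1) pr_fun_pred[OF pr_fun_proj[of 1]] assms(2)])
     (simp_all add: rec_nat_pred_eq_diff)

lemma pr_fun_power: "pr_fun m f \<Longrightarrow> pr_fun m g \<Longrightarrow> pr_fun m (\<lambda>xs. f xs ^ g xs)"
  by (rule pr_fun_rec_nat[where z="\<lambda>_. 1" and g="\<lambda>ys. f (drop 2 ys) * ys ! 1" and n=g])
     (auto intro: pr_fun_mult pr_fun_drop2 pr_fun_proj pr_fun_const simp: rec_nat_mult_eq_power)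

lemma pr_fun_sum:
  assumes "pr_fun (Suc m) f" "pr_fun m b"
  shows "pr_fun m (\<lambda>xs. \<Sum>i<b xs. f (i # xs))"
  by (rule pr_fun_rec_nat[where z="\<lambda>_. 0" and g="\<lambda>ys. ys ! 1 + f (hd ys # drop 2 ys)" and n=b])
     (use assms in \<open>auto intro!: pr_fun_add pr_fun_hd_drop2 pr_fun_proj pr_fun_const simp: rec_nat_eq_sum\<close>)

definition pr_pred :: "nat \<Rightarrow> (nat list \<Rightarrow> bool) \<Rightarrow> bool" where
  "pr_pred m P \<longleftrightarrow> pr_fun m (\<lambda>xs. of_bool (P xs))"

lemma pr_pred_cong:
  assumes "pr_pred n P" "\<And>xs. length xs = n \<Longrightarrow> P xs = Q xs" shows "pr_pred n Q"
  using assms(1) unfolding pr_pred_def by (rule pr_fun_cong) (simp add: assms(2))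

lemma pr_pred_const: "pr_pred m (\<lambda>xs. b)"
  unfolding pr_pred_def by (rule pr_fun_const)

lemma pr_pred_eq_0: "pr_fun m f \<Longrightarrow> pr_pred m (\<lambda>xs. f xs = 0)"
  unfolding pr_pred_def
  by (rule pr_fun_rec_nat[where z="\<lambda>_. 1" and g="\<lambda>ys. 0" and n=f])
     (auto intro: pr_fun_const simp: rec_nat_eq_of_bool_zero)

lemma pr_pred_le:
  assumes "pr_fun m f" "pr_fun m g" shows "pr_pred m (\<lambda>xs. f xs \<le> g xs)"
  by (rule pr_pred_cong[OF pr_pred_eq_0[OF pr_fun_diff[OF assms]]]) simp

lemma pr_pred_less:
  assumes "pr_fun m f" "pr_fun m g" shows "pr_pred m (\<lambda>xs. f xs < g xs)"
  by (rule pr_pred_cong[OF pr_pred_le[OF pr_fun_Suc[OF assms(1)] assms(2)]]) (simp add: Suc_le_eq)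

lemma pr_pred_not:
  assumes "pr_pred m P" shows "pr_pred m (\<lambda>xs. \<not> P xs)"
  using pr_fun_diff[OF pr_fun_const[of m 1] assms[unfolded pr_pred_def]]
  unfolding pr_pred_def by (rule pr_fun_cong) simp

lemma pr_pred_conj:
  assumes "pr_pred m P" "pr_pred m Q" shows "pr_pred m (\<lambda>xs. P xs \<and> Q xs)"
  using pr_fun_mult[OF assms[unfolded pr_pred_def]] unfolding pr_pred_def by (rule pr_fun_cong) simp

lemma pr_pred_disj:
  assumes "pr_pred m P" "pr_pred m Q" shows "pr_pred m (\<lambda>xs. P xs \<or> Q xs)"
  by (rule pr_pred_cong[OF pr_pred_not[OF pr_pred_conj[OF pr_pred_not[OF assms(1)] pr_pred_not[OF assms(2)]]]])
     simp

lemma pr_pred_eq: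
  assumes "pr_fun m f" "pr_fun m g" shows "pr_pred m (\<lambda>xs. f xs = g xs)"
  by (rule pr_pred_cong[OF pr_pred_conj[OF pr_pred_le[OF assms] pr_pred_le[OF assms(2,1)]]]) auto

lemma pr_pred_comp2:
  assumes "pr_pred 2 (\<lambda>xs. P (xs ! 0) (xs ! 1))" "pr_fun m f" "pr_fun m g"
  shows "pr_pred m (\<lambda>xs. P (f xs) (g xs))"
  using pr_fun_comp2[OF assms[unfolded pr_pred_def]] unfolding pr_pred_def .

lemma pr_fun_if:
  assumes "pr_pred m P" "pr_fun m f" "pr_fun m g"
  shows "pr_fun m (\<lambda>xs. if P xs then f xs else g xs)"
proof -
  have "pr_fun m (\<lambda>xs. of_bool (P xs) * f xs + of_bool (\<not> P xs) * g xs)"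
    using assms pr_pred_not unfolding pr_pred_def by (intro pr_fun_add pr_fun_mult)
  then show ?thesis by (rule pr_fun_cong) simp
qed

lemma pr_fun_mod: "pr_fun m f \<Longrightarrow> pr_fun m g \<Longrightarrow> pr_fun m (\<lambda>xs. f xs mod g xs)"
  by (rule pr_fun_rec_nat[where z="\<lambda>_. 0" and n=f
        and g="\<lambda>ys. if Suc (ys ! 1) = g (drop 2 ys) then 0 else Suc (ys ! 1)"])
     (auto intro!: pr_fun_if pr_pred_eq pr_fun_Suc pr_fun_drop2 pr_fun_proj pr_fun_const
       simp: rec_nat_eq_mod cong: if_cong)

lemma pr_fun_div: "pr_fun m f \<Longrightarrow> pr_fun m g \<Longrightarrow> pr_fun m (\<lambda>xs. f xs div g xs)"
  by (rule pr_fun_rec_nat[where z="\<lambda>_. 0" and n=f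
        and g="\<lambda>ys. if Suc (ys ! 0) mod g (drop 2 ys) = 0 then Suc (ys ! 1) else ys ! 1"])
     (auto intro!: pr_fun_if pr_pred_eq pr_fun_mod pr_fun_Suc pr_fun_drop2 pr_fun_proj pr_fun_const
       simp: rec_nat_eq_div cong: if_cong)

lemma pr_pred_bex_less:
  assumes "pr_pred (Suc m) P" "pr_fun m b"
  shows "pr_pred m (\<lambda>xs. \<exists>i<b xs. P (i # xs))"
proof -
  have "pr_fun m (\<lambda>xs. \<Sum>i<b xs. of_bool (P (i # xs)))"
    using pr_fun_sum[OF assms(1)[unfolded pr_pred_def] assms(2)] .
  then have "pr_pred m (\<lambda>xs. \<not> (\<Sum>i<b xs. of_bool (P (i # xs)) :: nat) = 0)"
    by (intro pr_pred_not pr_pred_eq_0)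
  then show ?thesis by (rule pr_pred_cong) auto
qed

lemma pr_pred_ball_less:
  assumes "pr_pred (Suc m) P" "pr_fun m b"
  shows "pr_pred m (\<lambda>xs. \<forall>i<b xs. P (i # xs))"
  by (rule pr_pred_cong[OF pr_pred_not[OF pr_pred_bex_less[OF pr_pred_not[OF assms(1)] assms(2)]]])
     auto

lemma pr_pred_finite_bex:
  assumes "finite A" "\<And>a. a \<in> A \<Longrightarrow> pr_pred m (P a)"
  shows "pr_pred m (\<lambda>xs. \<exists>a\<in>A. P a xs)"
  using assms by (induction A rule: finite_induct) (auto intro: pr_pred_const pr_pred_disj)

section \<open>Base-\<open>N\<close> numerals\<close>

lemma horner_sum_less_power:
  fixes f :: "'a \<Rightarrow> nat"
  assumes "\<forall>x\<in>set xs. f x < N"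
  shows "horner_sum f N xs < N ^ length xs"
  using assms
proof (induction xs)
  case (Cons x xs)
  then have "N * Suc (horner_sum f N xs) \<le> N * N ^ length xs"
    by (intro mult_le_mono2) simp
  with Cons.prems show ?case by simp
qed simp

lemma horner_sum_mod_div_power:
  fixes f :: "'a \<Rightarrow> nat"
  assumes "\<forall>x\<in>set xs. f x < N"
  shows "horner_sum f N xs mod N ^ k = horner_sum f N (take k xs)"
    and "horner_sum f N xs div N ^ k = horner_sum f N (drop k xs)"
proof -
  have "horner_sum f N xs mod N ^ k = horner_sum f N (take k xs)
      \<and> horner_sum f N xs div N ^ k = horner_sum f N (drop k xs)"
  proof (cases "k \<le> length xs")
    case True
    have split: "horner_sum f N xs = horner_sum f N (take k xs) + N ^ k * horner_sum f N (drop k xs)"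
      using horner_sum_append[of f N "take k xs" "drop k xs"] True by simp
    have take_less: "horner_sum f N (take k xs) < N ^ k"
      using horner_sum_less_power[of "take k xs" f N] assms True by (auto dest: in_set_takeD)
    then have "0 < N ^ k" by linarith
    with take_less show ?thesis by (subst (1 2) split) simp
  next
    case False
    show ?thesis
    proof (cases "xs = []")
      case False
      with assms have "0 < N" by (cases xs) auto
      then have "N ^ length xs \<le> N ^ k"
        using \<open>\<not> k \<le> length xs\<close> by (intro power_increasing) auto
      then have "horner_sum f N xs < N ^ k"
        using horner_sum_less_power[OF assms] by linarith
      with \<open>\<not> k \<le> length xs\<close> show ?thesis by simp
    qed simp
  qed
  then show "horner_sum f N xs mod N ^ k = horner_sum f N (take k xs)"
    and "horner_sum f N xs div N ^ k = horner_sum f N (drop k xs)" by blast+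
qed

definition digit :: "nat \<Rightarrow> nat \<Rightarrow> nat \<Rightarrow> nat" where
  "digit N i p = p div N ^ i mod N"

lemma digit_horner_sum:
  fixes f :: "'a \<Rightarrow> nat"
  assumes "\<forall>x\<in>set xs. f x < N" "i < length xs"
  shows "digit N i (horner_sum f N xs) = f (xs ! i)"
proof -
  have "drop i xs = xs ! i # drop (Suc i) xs"
    using assms(2) by (rule Cons_nth_drop_Suc[symmetric])
  then have "horner_sum f N xs div N ^ i = f (xs ! i) + N * horner_sum f N (drop (Suc i) xs)"
    using horner_sum_mod_div_power(2)[OF assms(1)] by simp
  moreover have "f (xs ! i) < N" using assms by simp
  ultimately show ?thesis unfolding digit_def by simp
qed

lemma div_mod_power_split:
  "(u::nat) = u mod b ^ k + b ^ k * (u div b ^ k mod b ^ l + b ^ l * (u div b ^ (k + l)))"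
proof -
  have "u div b ^ (k + l) = u div b ^ k div b ^ l" by (simp add: power_add div_mult2_eq)
  then show ?thesis by (metis mod_mult_div_eq)
qed

section \<open>Coding words, rewriting steps and reachability\<close>

text \<open>Digits are nonzero: otherwise appending a letter with digit \<open>0\<close> would not change the code.\<close>

locale digit_code =
  fixes Sig :: "'a set" and c :: "'a \<Rightarrow> nat" and B :: nat
  assumes base_ge_2: "2 \<le> B"
    and digit_pos: "a \<in> Sig \<Longrightarrow> 0 < c a"
    and digit_less: "a \<in> Sig \<Longrightarrow> c a < B"
    and inj_on_digit: "inj_on c Sig"
begin

abbreviation enc :: "'a list \<Rightarrow> nat" where
  "enc \<equiv> horner_sum c B"

lemma digits_less_base: "set w \<subseteq> Sig \<Longrightarrow> \<forall>a\<in>set w. c a < B"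
  using digit_less by blast

lemma enc_less_power: "set w \<subseteq> Sig \<Longrightarrow> enc w < B ^ length w"
  by (rule horner_sum_less_power[OF digits_less_base])

lemma enc_mod_power: "set w \<subseteq> Sig \<Longrightarrow> enc w mod B ^ k = enc (take k w)"
  by (rule horner_sum_mod_div_power(1)[OF digits_less_base])

lemma enc_div_power: "set w \<subseteq> Sig \<Longrightarrow> enc w div B ^ k = enc (drop k w)"
  by (rule horner_sum_mod_div_power(2)[OF digits_less_base])

lemma enc_pos_iff: "set w \<subseteq> Sig \<Longrightarrow> 0 < enc w \<longleftrightarrow> w \<noteq> []"
  using digit_pos by (cases w) auto

lemma enc_div_power_pos_iff: "set w \<subseteq> Sig \<Longrightarrow> 0 < enc w div B ^ k \<longleftrightarrow> k < length w"
  using enc_div_power[of w k] enc_pos_iff[of "drop k w"] set_drop_subset[of k w] by auto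

lemma length_le_enc: "set w \<subseteq> Sig \<Longrightarrow> length w \<le> enc w"
proof (induction w)
  case (Cons a w)
  then have "length w \<le> enc w" "0 < c a" using digit_pos by auto
  moreover have "enc w \<le> B * enc w" using base_ge_2 by simp
  ultimately have "Suc (length w) \<le> c a + B * enc w" by linarith
  then show ?case by simp
qed simp

lemma inj_on_enc: "inj_on enc {w. set w \<subseteq> Sig}"
proof (rule inj_onI)
  fix w w' assume "w \<in> {w. set w \<subseteq> Sig}" "w' \<in> {w. set w \<subseteq> Sig}" "enc w = enc w'"
  then show "w = w'"
  proof (induction w arbitrary: w')
    case Nil
    then show ?case using enc_pos_iff[of w'] by auto
  next
    case (Cons a w)
    then obtain b v where w': "w' = b # v"
      using enc_pos_iff[of "a # w"] enc_pos_iff[of w'] by (cases w') auto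
    have ab: "c a < B" "c b < B" "a \<in> Sig" "b \<in> Sig" using Cons.prems w' digit_less by auto
    have eq: "c a + B * enc w = c b + B * enc v" using Cons.prems(3) w' by simp
    have "(c a + B * enc w) mod B = c a" "(c b + B * enc v) mod B = c b" using ab by simp_all
    then have "a = b" using eq inj_on_digit ab by (metis inj_onD)
    have "(c a + B * enc w) div B = enc w" "(c b + B * enc v) div B = enc v" using ab by simp_all
    then have "enc w = enc v" using eq by simp
    then have "w = v" using Cons.IH Cons.prems w' by auto
    with \<open>a = b\<close> show ?case using w' by simp
  qed
qed

end

lemma digit_code_exists:
  assumes "finite Sig" shows "\<exists>c B. digit_code Sig c B"
proof -
  obtain h where h: "bij_betw h Sig {0..<card Sig}"
    using ex_bij_betw_finite_nat[OF assms] by blast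
  have "digit_code Sig (\<lambda>a. Suc (h a)) (card Sig + 2)"
    using h bij_betw_imp_inj_on[OF h] by unfold_locales (auto simp: inj_on_def dest: bij_betw_apply)
  then show ?thesis by blast
qed

locale multiway_code = digit_code Sig c B for Sig :: "'a set" and c B +
  fixes R :: "('a list \<times> 'a list) set" and s :: "'a list"
  assumes finite_rules: "finite R"
    and rules_over_Sig: "(r, t) \<in> R \<Longrightarrow> set r \<subseteq> Sig \<and> set t \<subseteq> Sig"
    and init_over_Sig: "set s \<subseteq> Sig"
begin

text \<open>The rule \<open>(r, t)\<close> is applied at position \<open>i\<close>: the lowest \<open>i\<close> digits agree, the next ones are
  \<open>enc r\<close> resp. \<open>enc t\<close>, and the remaining ones agree. The first conjunct says that \<open>i\<close> is at most
  the length of the word; \<open>Suc u\<close> bounds the search because \<open>length w \<le> enc w\<close>.\<close>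

definition step_code :: "nat \<Rightarrow> nat \<Rightarrow> bool" where
  "step_code u v \<longleftrightarrow> (\<exists>(r, t)\<in>R. \<exists>i<Suc u. (i = 0 \<or> 0 < u div B ^ (i - 1))
     \<and> u mod B ^ i = v mod B ^ i
     \<and> u div B ^ i mod B ^ length r = enc r
     \<and> v div B ^ i mod B ^ length t = enc t
     \<and> u div B ^ (i + length r) = v div B ^ (i + length t))"

lemma mw_step_imp_step_code:
  assumes "mw_step R w w'" "set w \<subseteq> Sig"
  shows "step_code (enc w) (enc w')"
proof -
  obtain r t x y where rt: "(r, t) \<in> R" and w: "w = x @ r @ y" and w': "w' = x @ t @ y"
    using assms(1) unfolding mw_step_def by blast
  have words: "set x \<subseteq> Sig" "set r \<subseteq> Sig" "set y \<subseteq> Sig" "set t \<subseteq> Sig" "set w' \<subseteq> Sig"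
    using assms(2) w w' rules_over_Sig[OF rt] by auto
  let ?i = "length x"
  have "?i < Suc (enc w)" using length_le_enc[OF assms(2)] w by simp
  moreover have "?i = 0 \<or> 0 < enc w div B ^ (?i - 1)"
    using enc_div_power_pos_iff[OF assms(2), of "?i - 1"] w by (cases x) simp_all
  moreover have "enc w mod B ^ ?i = enc w' mod B ^ ?i"
    using enc_mod_power[OF assms(2)] enc_mod_power[OF words(5)] w w' by simp
  moreover have "enc w div B ^ ?i mod B ^ length r = enc r"
    using enc_div_power[OF assms(2), of ?i] enc_mod_power[of "r @ y" "length r"] words w by simp
  moreover have "enc w' div B ^ ?i mod B ^ length t = enc t"
    using enc_div_power[OF words(5), of ?i] enc_mod_power[of "t @ y" "length t"] words w' by simp
  moreover have "enc w div B ^ (?i + length r) = enc w' div B ^ (?i + length t)"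
    using enc_div_power[OF assms(2), of "?i + length r"] enc_div_power[OF words(5), of "?i + length t"] w w'
    by simp
  ultimately show ?thesis unfolding step_code_def using rt by blast
qed

lemma step_code_imp_mw_step:
  assumes "step_code (enc w) v" "set w \<subseteq> Sig"
  shows "\<exists>w'. v = enc w' \<and> mw_step R w w'"
proof -
  obtain r t i where rt: "(r, t) \<in> R" and i: "i = 0 \<or> 0 < enc w div B ^ (i - 1)"
    and prefix: "enc w mod B ^ i = v mod B ^ i"
    and lhs: "enc w div B ^ i mod B ^ length r = enc r"
    and rhs: "v div B ^ i mod B ^ length t = enc t"
    and suffix: "enc w div B ^ (i + length r) = v div B ^ (i + length t)"
    using assms(1) unfolding step_code_def by blast
  have "i \<le> length w"
    using i enc_div_power_pos_iff[OF assms(2), of "i - 1"] by (cases "i = 0") simp_all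
  define x where "x = take i w"
  define y where "y = drop (i + length r) w"
  have "length x = i" using \<open>i \<le> length w\<close> by (simp add: x_def)
  have enc_x: "enc w mod B ^ i = enc x" using enc_mod_power[OF assms(2)] by (simp add: x_def)
  have enc_y: "enc w div B ^ (i + length r) = enc y" using enc_div_power[OF assms(2)] by (simp add: y_def)
  have "enc w = enc x + B ^ i * (enc r + B ^ length r * enc y)"
    using div_mod_power_split[of "enc w" B i "length r"] enc_x enc_y lhs by simp
  then have "enc w = enc (x @ r @ y)" using \<open>length x = i\<close> by (simp add: horner_sum_append)
  moreover have "set (x @ r @ y) \<subseteq> Sig"
    using assms(2) rules_over_Sig[OF rt] by (auto simp: x_def y_def dest: in_set_takeD in_set_dropD)
  ultimately have w: "w = x @ r @ y" using inj_onD[OF inj_on_enc, of w] assms(2) by simp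
  have "v = enc x + B ^ i * (enc t + B ^ length t * enc y)"
    using div_mod_power_split[of v B i "length t"] enc_x enc_y prefix rhs suffix by simp
  then have "v = enc (x @ t @ y)" using \<open>length x = i\<close> by (simp add: horner_sum_append)
  moreover have "mw_step R w (x @ t @ y)" unfolding mw_step_def using rt w by blast
  ultimately show ?thesis by blast
qed

definition max_rhs_length :: nat where
  "max_rhs_length = Max (insert 0 ((length \<circ> snd) ` R))"

lemma rhs_length_le: "(r, t) \<in> R \<Longrightarrow> length t \<le> max_rhs_length"
  unfolding max_rhs_length_def using finite_rules by (intro Max_ge) force+

lemma reachable_word_bounds:
  "(mw_step R ^^ k) s w \<Longrightarrow> set w \<subseteq> Sig \<and> length w \<le> length s + k * max_rhs_length"
proof (induction k arbitrary: w)
  case 0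
  then show ?case using init_over_Sig by simp
next
  case (Suc k)
  then obtain u where u: "(mw_step R ^^ k) s u" "mw_step R u w" by (auto elim: relpowp_Suc_E)
  have "set w \<subseteq> set u \<union> Sig \<and> length w \<le> length u + max_rhs_length"
    using u(2) rules_over_Sig rhs_length_le unfolding mw_step_def by fastforce
  with Suc.IH[OF u(1)] show ?case by auto
qed

definition code_bound :: "nat \<Rightarrow> nat" where
  "code_bound k = B ^ (length s + k * max_rhs_length)"

lemma enc_reachable_less:
  assumes "(mw_step R ^^ j) s w" "j \<le> k"
  shows "enc w < code_bound k"
proof -
  have "enc w < B ^ length w" using enc_less_power reachable_word_bounds[OF assms(1)] by blast
  also have "\<dots> \<le> code_bound k"
    unfolding code_bound_def using reachable_word_bounds[OF assms(1)] assms(2) base_ge_2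
    by (intro power_increasing) (auto intro: order_trans mult_le_mono1)
  finally show ?thesis .
qed

definition reach_code :: "nat \<Rightarrow> nat \<Rightarrow> bool" where
  "reach_code k v \<longleftrightarrow> (\<exists>p<code_bound k ^ Suc k.
     digit (code_bound k) 0 p = enc s \<and> digit (code_bound k) k p = v
     \<and> (\<forall>i<k. step_code (digit (code_bound k) i p) (digit (code_bound k) (Suc i) p)))"

lemma reach_code_imp_reachable:
  assumes "reach_code k v" shows "\<exists>w. (mw_step R ^^ k) s w \<and> v = enc w"
proof -
  obtain p where p: "digit (code_bound k) 0 p = enc s" "digit (code_bound k) k p = v"
    "\<forall>i<k. step_code (digit (code_bound k) i p) (digit (code_bound k) (Suc i) p)"
    using assms unfolding reach_code_def by blast
  have "\<exists>w. (mw_step R ^^ i) s w \<and> digit (code_bound k) i p = enc w" if "i \<le> k" for i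
    using that
  proof (induction i)
    case 0
    then show ?case using p(1) by auto
  next
    case (Suc i)
    then obtain w where w: "(mw_step R ^^ i) s w" "digit (code_bound k) i p = enc w" by auto
    then have "step_code (enc w) (digit (code_bound k) (Suc i) p)"
      using p(3) Suc.prems by (metis Suc_le_lessD)
    then obtain w' where "digit (code_bound k) (Suc i) p = enc w'" "mw_step R w w'"
      using step_code_imp_mw_step reachable_word_bounds[OF w(1)] by blast
    then show ?case using relpowp_Suc_I[OF w(1)] by blast
  qed
  then show ?thesis using p(2) by blast
qed

lemma reachable_imp_reach_code:
  assumes "(mw_step R ^^ k) s w" shows "reach_code k (enc w)"
proof -
  obtain f where f: "f 0 = s" "f k = w" "\<forall>i<k. mw_step R (f i) (f (Suc i))"
    using assms unfolding relpowp_fun_conv by blast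
  have reach: "(mw_step R ^^ i) s (f i)" if "i \<le> k" for i
    using that f(1,3) by (induction i) (auto intro: relpowp_Suc_I)
  define p where "p = horner_sum (\<lambda>i. enc (f i)) (code_bound k) [0..<Suc k]"
  have digits: "\<forall>i\<in>set [0..<Suc k]. enc (f i) < code_bound k"
    using enc_reachable_less[OF reach] by auto
  have digit_p: "digit (code_bound k) i p = enc (f i)" if "i \<le> k" for i
    using digit_horner_sum[OF digits, of i] that unfolding p_def by (simp del: upt_Suc)
  have "p < code_bound k ^ Suc k"
    using horner_sum_less_power[OF digits] unfolding p_def by simp
  moreover have "step_code (digit (code_bound k) i p) (digit (code_bound k) (Suc i) p)" if "i < k" for i
    using digit_p mw_step_imp_step_code f(3) reachable_word_bounds[OF reach] that by simp
  ultimately show ?thesis unfolding reach_code_def using digit_p[of 0] digit_p[of k] f(1,2) by auto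
qed

lemma reach_code_iff: "reach_code k v \<longleftrightarrow> (\<exists>w. (mw_step R ^^ k) s w \<and> v = enc w)"
  using reach_code_imp_reachable reachable_imp_reach_code by blast

lemma reach_code_enc_iff: "set w \<subseteq> Sig \<Longrightarrow> reach_code k (enc w) \<longleftrightarrow> (mw_step R ^^ k) s w"
  using reach_code_iff[of k "enc w"] inj_onD[OF inj_on_enc, of w] reachable_word_bounds by auto

definition layer_code :: "nat \<Rightarrow> nat \<Rightarrow> bool" where
  "layer_code k v \<longleftrightarrow> reach_code k v \<and> (\<forall>j<k. \<not> reach_code j v)"

lemma enc_image_mw_layer: "enc ` mw_layer R s k = {v. v < code_bound k \<and> layer_code k v}"
proof (intro equalityI subsetI)
  fix v assume "v \<in> enc ` mw_layer R s k"
  then obtain w where w: "w \<in> mw_layer R s k" "v = enc w" by blast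
  then have "set w \<subseteq> Sig" "enc w < code_bound k"
    using reachable_word_bounds enc_reachable_less unfolding mw_layer_def by auto
  with w show "v \<in> {v. v < code_bound k \<and> layer_code k v}"
    unfolding mw_layer_def layer_code_def by (simp add: reach_code_enc_iff)
next
  fix v assume "v \<in> {v. v < code_bound k \<and> layer_code k v}"
  then have "layer_code k v" by blast
  then obtain w where w: "(mw_step R ^^ k) s w" "v = enc w"
    unfolding layer_code_def using reach_code_iff by blast
  then have "set w \<subseteq> Sig" using reachable_word_bounds by blast
  with w \<open>layer_code k v\<close> show "v \<in> enc ` mw_layer R s k"
    unfolding mw_layer_def layer_code_def by (simp add: reach_code_enc_iff)
qed

lemma card_mw_layer: "card (mw_layer R s k) = (\<Sum>v<code_bound k. of_bool (layer_code k v))"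
proof -
  have "inj_on enc (mw_layer R s k)"
    using reachable_word_bounds by (intro inj_on_subset[OF inj_on_enc]) (auto simp: mw_layer_def)
  then have "card (mw_layer R s k) = card {v. v < code_bound k \<and> layer_code k v}"
    by (simp flip: enc_image_mw_layer add: card_image)
  also have "\<dots> = (\<Sum>v<code_bound k. of_bool (layer_code k v))"
    by (simp add: Int_def conj_commute)
  finally show ?thesis .
qed

lemma pr_pred_step_code:
  assumes "pr_fun m f" "pr_fun m g" shows "pr_pred m (\<lambda>xs. step_code (f xs) (g xs))"
proof (rule pr_pred_comp2[OF _ assms])
  let ?P = "\<lambda>r t ys. (ys ! 0 = 0 \<or> 0 < ys ! 1 div B ^ (ys ! 0 - 1))
     \<and> ys ! 1 mod B ^ ys ! 0 = ys ! 2 mod B ^ ys ! 0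
     \<and> ys ! 1 div B ^ ys ! 0 mod B ^ length r = enc r
     \<and> ys ! 2 div B ^ ys ! 0 mod B ^ length t = enc t
     \<and> ys ! 1 div B ^ (ys ! 0 + length r) = ys ! 2 div B ^ (ys ! 0 + length t)"
  have "pr_pred 3 (?P r t)" for r t
    by (intro pr_pred_conj pr_pred_disj pr_pred_eq pr_pred_less pr_fun_mod pr_fun_div pr_fun_power
        pr_fun_add pr_fun_diff pr_fun_proj pr_fun_const) simp_all
  then have "pr_pred 2 (\<lambda>xs. \<exists>i<Suc (xs ! 0). ?P r t (i # xs))" for r t
    by (intro pr_pred_bex_less pr_fun_Suc pr_fun_proj) (simp_all add: numeral_3_eq_3)
  then have "pr_pred 2 (\<lambda>xs. \<exists>(r, t)\<in>R. \<exists>i<Suc (xs ! 0). ?P r t (i # xs))"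
    using finite_rules by (intro pr_pred_finite_bex) (auto simp: split_beta)
  then show "pr_pred 2 (\<lambda>xs. step_code (xs ! 0) (xs ! 1))"
    unfolding step_code_def by (rule pr_pred_cong) simp
qed

lemma pr_fun_code_bound: "pr_fun m f \<Longrightarrow> pr_fun m (\<lambda>xs. code_bound (f xs))"
  unfolding code_bound_def by (intro pr_fun_power pr_fun_add pr_fun_mult pr_fun_const)

lemma pr_fun_digit:
  "pr_fun m n \<Longrightarrow> pr_fun m i \<Longrightarrow> pr_fun m p \<Longrightarrow> pr_fun m (\<lambda>xs. digit (n xs) (i xs) (p xs))"
  unfolding digit_def by (intro pr_fun_power pr_fun_mod pr_fun_div)

lemma pr_pred_reach_code:
  assumes "pr_fun m f" "pr_fun m g" shows "pr_pred m (\<lambda>xs. reach_code (f xs) (g xs))"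
proof (rule pr_pred_comp2[OF _ assms])
  let ?step = "\<lambda>zs. step_code (digit (code_bound (zs ! 2)) (zs ! 0) (zs ! 1))
      (digit (code_bound (zs ! 2)) (Suc (zs ! 0)) (zs ! 1))"
  let ?path = "\<lambda>ys. digit (code_bound (ys ! 1)) 0 (ys ! 0) = enc s
      \<and> digit (code_bound (ys ! 1)) (ys ! 1) (ys ! 0) = ys ! 2 \<and> (\<forall>i<ys ! 1. ?step (i # ys))"
  have "pr_pred 4 ?step"
    by (intro pr_pred_step_code pr_fun_digit pr_fun_code_bound pr_fun_Suc pr_fun_proj) simp_all
  then have "pr_pred 3 (\<lambda>ys. \<forall>i<ys ! 1. ?step (i # ys))"
    by (intro pr_pred_ball_less pr_fun_proj) (simp_all add: numeral_3_eq_3 numeral_Bit0)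
  then have "pr_pred 3 ?path"
    by (intro pr_pred_conj pr_pred_eq pr_fun_digit pr_fun_code_bound pr_fun_proj pr_fun_const) simp_all
  then have "pr_pred 2 (\<lambda>xs. \<exists>p<code_bound (xs ! 0) ^ Suc (xs ! 0). ?path (p # xs))"
    by (intro pr_pred_bex_less pr_fun_power pr_fun_code_bound pr_fun_Suc pr_fun_proj)
      (simp_all add: numeral_3_eq_3)
  then show "pr_pred 2 (\<lambda>xs. reach_code (xs ! 0) (xs ! 1))"
    unfolding reach_code_def by (rule pr_pred_cong) simp
qed

lemma pr_fun_growth: "pr_fun 1 (\<lambda>xs. growth R s (xs ! 0))"
proof -
  let ?layer = "\<lambda>ys. reach_code (ys ! 1 - 1) (ys ! 0) \<and> (\<forall>j<ys ! 1 - 1. \<not> reach_code j (ys ! 0))"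
  have "pr_pred 3 (\<lambda>zs. \<not> reach_code (zs ! 0) (zs ! 1))"
    by (intro pr_pred_not pr_pred_reach_code pr_fun_proj) simp_all
  then have "pr_pred 2 (\<lambda>ys. \<forall>j<ys ! 1 - 1. \<not> reach_code ((j # ys) ! 0) ((j # ys) ! 1))"
    by (intro pr_pred_ball_less pr_fun_diff pr_fun_proj pr_fun_const) (simp_all add: numeral_3_eq_3)
  then have "pr_pred 2 (\<lambda>ys. \<forall>j<ys ! 1 - 1. \<not> reach_code j (ys ! 0))"
    by (rule pr_pred_cong) simp
  then have "pr_pred 2 ?layer"
    by (intro pr_pred_conj pr_pred_reach_code pr_fun_diff pr_fun_proj pr_fun_const) simp_all
  then have "pr_fun 1 (\<lambda>xs. \<Sum>v<code_bound (xs ! 0 - 1). of_bool (?layer (v # xs)))"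
    unfolding pr_pred_def
    by (intro pr_fun_sum pr_fun_code_bound pr_fun_diff pr_fun_proj pr_fun_const)
      (simp_all add: numeral_2_eq_2)
  then show ?thesis
    by (rule pr_fun_cong) (simp add: growth_def card_mw_layer layer_code_def)
qed

theorem growth_prim_rec: "\<exists>f. prim_rec 1 f \<and> (\<forall>n. f [n] = growth R s n)"
proof -
  obtain f where "prim_rec 1 f" "\<forall>xs. length xs = 1 \<longrightarrow> f xs = growth R s (xs ! 0)"
    using pr_fun_growth unfolding pr_fun_def by blast
  then show ?thesis by auto
qed

end

theorem lemma5:
  fixes \<Sigma> :: "'a set" and R :: "('a list \<times> 'a list) set" and s_init :: "'a list"
  assumes "finite \<Sigma>" and "finite R"
    and "\<forall>(r, t)\<in>R. set r \<subseteq> \<Sigma> \<and> set t \<subseteq> \<Sigma>"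
    and "set s_init \<subseteq> \<Sigma>"
  shows "\<exists>f. prim_rec 1 f \<and> (\<forall>n\<ge>1. f [n] = growth R s_init n)"
proof -
  obtain c B where "digit_code \<Sigma> c B" using digit_code_exists[OF assms(1)] by blast
  then interpret multiway_code \<Sigma> c B R s_init
    using assms(2-4) by (intro multiway_code.intro multiway_code_axioms.intro) auto
  show ?thesis using growth_prim_rec by blast
qed

end
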